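(* Let $X_1,X_2,X_3,X_4$ be finite discrete random variables, where $X_1$ and $X_3$ are binary with values in $\{1,2\}$ and $X_i$ takes values in $[r_i]=\{1,\dots,r_i\}$ for $i\in\{2,4\}$. Suppose that $X_1 \perp\!\!\!\perp X_3 \mid (X_2,X_4)$ and $X_2 \perp\!\!\!\perp X_4 \mid (X_1,X_3)$. Then at least one of the following is true: (1) the joint distribution lies in the closure of the graphical model $\mathcal{M}_{C_4}$; (2) there are $i\in\{2,4\}$ and sets $E,F\subseteq[r_i]$ such that (almost surely): if $(X_1,X_3)=(1,1)$ then $X_i\in E$; if $(X_1,X_3)=(1,2)$ then $X_i\in F$; if $(X_1,X_3)=(2,1)$ then $X_i\notin F$; if $(X_1,X_3)=(2,2)$ then $X_i\notin E$. Conversely, any probability distribution of $(X_1,X_2,X_3,X_4)$ that satisfies one of the statements (1) or (2) and that satisfies $X_2 \perp\!\!\!\perp X_4 \mid (X_1,X_3)$ also satisfies $X_1 \perp\!\!\!\perp X_3 \mid (X_2,X_4)$ and $X_2 \perp\!\!\!\perp X_4 \mid (X_1,X_3)$.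
   Context: $C_4$ is the four-cycle graph on vertices $\{1,2,3,4\}$ with edges $\{1,2\},\{2,3\},\{3,4\},\{1,4\}$. The graphical model $\mathcal{M}_{C_4}$ is the set of strictly positive probability distributions $p$ on $\{1,2\}\times[r_2]\times\{1,2\}\times[r_4]$ that factor as $p(x_1,x_2,x_3,x_4)=\psi_{12}(x_1,x_2)\psi_{23}(x_2,x_3)\psi_{34}(x_3,x_4)\psi_{14}(x_1,x_4)$ for some functions $\psi_{ij}$; its closure is taken in the Euclidean topology. Distributions may have zeros; conditional independence conditions only on events of positive probability. *)

theory Defs
  imports "HOL-Analysis.Analysis"
begin

text \<open>A joint distribution of (X1,X2,X3,X4) on {1,2} x [r2] x {1,2} x [r4] is represented
  by its probability mass function p :: nat => nat => nat => nat => real; only its values on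
  the state space matter.\<close>

type_synonym pmf4 = "nat \<Rightarrow> nat \<Rightarrow> nat \<Rightarrow> nat \<Rightarrow> real"

definition in_space :: "nat \<Rightarrow> nat \<Rightarrow> nat \<Rightarrow> nat \<Rightarrow> nat \<Rightarrow> nat \<Rightarrow> bool" where
  "in_space r2 r4 x1 x2 x3 x4 \<longleftrightarrow>
     x1 \<in> {1..2} \<and> x2 \<in> {1..r2} \<and> x3 \<in> {1..2} \<and> x4 \<in> {1..r4}"

definition is_dist :: "nat \<Rightarrow> nat \<Rightarrow> pmf4 \<Rightarrow> bool" where
  "is_dist r2 r4 p \<longleftrightarrow>
     (\<forall>x1 x2 x3 x4. in_space r2 r4 x1 x2 x3 x4 \<longrightarrow> p x1 x2 x3 x4 \<ge> 0) \<and>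
     (\<Sum>x1\<in>{1..2}. \<Sum>x2\<in>{1..r2}. \<Sum>x3\<in>{1..2}. \<Sum>x4\<in>{1..r4}. p x1 x2 x3 x4) = 1"

definition CI_13_24 :: "nat \<Rightarrow> nat \<Rightarrow> pmf4 \<Rightarrow> bool" where
  "CI_13_24 r2 r4 p \<longleftrightarrow>
     (\<forall>c\<in>{1..r2}. \<forall>d\<in>{1..r4}.
        let m = (\<Sum>a\<in>{1..2}. \<Sum>b\<in>{1..2}. p a c b d) in
        m > 0 \<longrightarrow>
        (\<forall>a\<in>{1..2}. \<forall>b\<in>{1..2}.
           p a c b d / m =
           ((\<Sum>b'\<in>{1..2}. p a c b' d) / m) * ((\<Sum>a'\<in>{1..2}. p a' c b d) / m)))"

definition CI_24_13 :: "nat \<Rightarrow> nat \<Rightarrow> pmf4 \<Rightarrow> bool" where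
  "CI_24_13 r2 r4 p \<longleftrightarrow>
     (\<forall>a\<in>{1..2}. \<forall>b\<in>{1..2}.
        let m = (\<Sum>c\<in>{1..r2}. \<Sum>d\<in>{1..r4}. p a c b d) in
        m > 0 \<longrightarrow>
        (\<forall>c\<in>{1..r2}. \<forall>d\<in>{1..r4}.
           p a c b d / m =
           ((\<Sum>d'\<in>{1..r4}. p a c b d') / m) * ((\<Sum>c'\<in>{1..r2}. p a c' b d) / m)))"

definition model_C4 :: "nat \<Rightarrow> nat \<Rightarrow> pmf4 \<Rightarrow> bool" where
  "model_C4 r2 r4 p \<longleftrightarrow>
     is_dist r2 r4 p \<and>
     (\<forall>x1 x2 x3 x4. in_space r2 r4 x1 x2 x3 x4 \<longrightarrow> p x1 x2 x3 x4 > 0) \<and>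
     (\<exists>\<psi>12 \<psi>23 \<psi>34 \<psi>14 :: nat \<Rightarrow> nat \<Rightarrow> real.
        \<forall>x1 x2 x3 x4. in_space r2 r4 x1 x2 x3 x4 \<longrightarrow>
          p x1 x2 x3 x4 = \<psi>12 x1 x2 * \<psi>23 x2 x3 * \<psi>34 x3 x4 * \<psi>14 x1 x4)"

text \<open>Euclidean closure in the (finite-dimensional) space of functions on the state space:
  limit of a sequence of model distributions, converging coordinatewise on the state space.\<close>

definition closure_model_C4 :: "nat \<Rightarrow> nat \<Rightarrow> pmf4 \<Rightarrow> bool" where
  "closure_model_C4 r2 r4 p \<longleftrightarrow>
     (\<exists>q :: nat \<Rightarrow> pmf4. (\<forall>n. model_C4 r2 r4 (q n)) \<and>
        (\<forall>x1 x2 x3 x4. in_space r2 r4 x1 x2 x3 x4 \<longrightarrow>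
           (\<lambda>n. q n x1 x2 x3 x4) \<longlonglongrightarrow> p x1 x2 x3 x4))"

text \<open>Statement (2) with a given index i in {2,4}: almost surely the implications hold,
  i.e. for every state of positive probability.\<close>

definition coord :: "nat \<Rightarrow> nat \<Rightarrow> nat \<Rightarrow> nat" where
  "coord i x2 x4 = (if i = 2 then x2 else x4)"

definition cond2 :: "nat \<Rightarrow> nat \<Rightarrow> pmf4 \<Rightarrow> bool" where
  "cond2 r2 r4 p \<longleftrightarrow>
     (\<exists>i\<in>{2,4::nat}. \<exists>E F. E \<subseteq> {1..(if i = 2 then r2 else r4)} \<and>
                           F \<subseteq> {1..(if i = 2 then r2 else r4)} \<and>
        (\<forall>x1 x2 x3 x4. in_space r2 r4 x1 x2 x3 x4 \<and> p x1 x2 x3 x4 > 0 \<longrightarrow>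
            ((x1, x3) = (1, 1) \<longrightarrow> coord i x2 x4 \<in> E) \<and>
            ((x1, x3) = (1, 2) \<longrightarrow> coord i x2 x4 \<in> F) \<and>
            ((x1, x3) = (2, 1) \<longrightarrow> coord i x2 x4 \<notin> F) \<and>
            ((x1, x3) = (2, 2) \<longrightarrow> coord i x2 x4 \<notin> E)))"

end

theory Submission
  imports Defs
begin

text \<open>
  Given X2 \<bottom> X4 | (X1,X3), every table p(a,\<cdot>,b,\<cdot>) is the outer product of the marginal
  tables u(c) = P(X1,X2=c,X3) and v(d) = P(X1,X3,X4=d), divided by W = P(X1,X3). Given
  X1 \<bottom> X3 | (X2,X4), every 2x2 slice in (X1,X3) has vanishing determinant. Combined, the
  diagonal and antidiagonal products of u(c) and v(d) satisfy
  diag u(c) diag v(d) = \<rho> antidiag u(c) antidiag v(d), where \<rho> is the cross ratio of W.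
  Unless (2) holds, i.e. all u(c) or all v(d) have both products zero, this forces a common
  cross ratio \<kappa> of the u(c) and \<mu> of the v(d) with \<kappa> \<mu> = \<rho>; when \<kappa> is 0 or \<infinity> it is
  replaced by \<epsilon>^2 or \<rho>/\<epsilon>^2. Approximating every u(c) and v(d) by positive tables with these
  cross ratios gives positive distributions satisfying both independences; these factor along
  the four-cycle (Hammersley-Clifford) and converge to p. Conversely, (1) and (2) each make the
  slice determinants vanish, which is X1 \<bottom> X3 | (X2,X4).
\<close>

section \<open>Cross ratios of 2x2 tables\<close>

definition diag_prod :: "(nat \<Rightarrow> nat \<Rightarrow> real) \<Rightarrow> real" where
  "diag_prod x = x 1 1 * x 2 2"

definition antidiag_prod :: "(nat \<Rightarrow> nat \<Rightarrow> real) \<Rightarrow> real" where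
  "antidiag_prod x = x 1 2 * x 2 1"

definition cross_ratio_limit :: "(nat \<Rightarrow> real) \<Rightarrow> (nat \<Rightarrow> nat \<Rightarrow> real) \<Rightarrow> bool" where
  "cross_ratio_limit \<kappa> x \<longleftrightarrow> (\<exists>Y :: nat \<Rightarrow> nat \<Rightarrow> nat \<Rightarrow> real.
     (\<forall>n. \<forall>a\<in>{1,2}. \<forall>b\<in>{1,2}. 0 < Y n a b) \<and>
     (\<forall>n. diag_prod (Y n) = \<kappa> n * antidiag_prod (Y n)) \<and>
     (\<forall>a\<in>{1,2}. \<forall>b\<in>{1,2}. (\<lambda>n. Y n a b) \<longlonglongrightarrow> x a b))"

lemma rank_one_2x2:
  fixes x :: "nat \<Rightarrow> nat \<Rightarrow> real"
  assumes nonneg: "\<forall>a\<in>{1,2}. \<forall>b\<in>{1,2}. 0 \<le> x a b"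
    and det: "diag_prod x = antidiag_prod x"
  obtains f g :: "nat \<Rightarrow> real" where "\<forall>a\<in>{1,2}. 0 \<le> f a" "\<forall>b\<in>{1,2}. 0 \<le> g b"
    "\<forall>a\<in>{1,2}. \<forall>b\<in>{1,2}. x a b = f a * g b"
proof (cases "x 1 1 + x 1 2 = 0")
  case True
  then have "x 1 1 = 0" "x 1 2 = 0" using nonneg by auto
  then show ?thesis
    using nonneg by (intro that[of "\<lambda>a. if a = 1 then 0 else 1" "\<lambda>b. x 2 b"]) auto
next
  case False
  then have row1: "x 1 1 + x 1 2 > 0" using nonneg by (simp add: add_nonneg_nonneg order_le_neq_trans)
  define t where "t = (x 2 1 + x 2 2) / (x 1 1 + x 1 2)"
  have "x 2 1 = t * x 1 1" "x 2 2 = t * x 1 2"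
    using row1 det unfolding t_def diag_prod_def antidiag_prod_def
    by (simp_all add: field_simps; simp add: algebra_simps)+
  moreover have "t \<ge> 0" unfolding t_def using nonneg row1 by simp
  ultimately show ?thesis
    using nonneg by (intro that[of "\<lambda>a. if a = 1 then 1 else t" "\<lambda>b. x 1 b"]) auto
qed

lemma cross_ratio_limit_const:
  fixes x :: "nat \<Rightarrow> nat \<Rightarrow> real"
  assumes nonneg: "\<forall>a\<in>{1,2}. \<forall>b\<in>{1,2}. 0 \<le> x a b" and "l > 0"
    and det: "diag_prod x = l * antidiag_prod x"
  shows "cross_ratio_limit (\<lambda>n. l) x"
proof -
  \<comment> \<open>Dividing the (1,1) entry by l leaves a rank-one table f g; putting the factor l back
    onto the positive tables (f + 1/(n+1)) (g + 1/(n+1)) gives cross ratio l.\<close>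
  define K where "K a b = (if a = 1 \<and> b = 1 then l else 1)" for a b :: nat
  have K_pos: "K a b > 0" for a b using \<open>l > 0\<close> by (simp add: K_def)
  obtain f g where f: "\<forall>a\<in>{1,2}. 0 \<le> f a" and g: "\<forall>b\<in>{1,2}. 0 \<le> g b"
    and fg: "\<forall>a\<in>{1,2}. \<forall>b\<in>{1,2}. x a b / K a b = f a * g b"
  proof (rule rank_one_2x2)
    show "\<forall>a\<in>{1,2}. \<forall>b\<in>{1,2}. 0 \<le> x a b / K a b"
      using nonneg K_pos by (auto intro: divide_nonneg_pos)
    show "diag_prod (\<lambda>a b. x a b / K a b) = antidiag_prod (\<lambda>a b. x a b / K a b)"
      using det \<open>l > 0\<close> by (simp add: K_def diag_prod_def antidiag_prod_def field_simps)
  qed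
  define Y where "Y n a b = K a b * (f a + inverse (Suc n)) * (g b + inverse (Suc n))" for n a b
  have "(\<lambda>n. Y n a b) \<longlonglongrightarrow> x a b" if "a \<in> {1,2}" "b \<in> {1,2}" for a b
  proof -
    have "(\<lambda>n. Y n a b) \<longlonglongrightarrow> K a b * (f a + 0) * (g b + 0)"
      unfolding Y_def by (intro tendsto_intros LIMSEQ_inverse_real_of_nat)
    moreover have "x a b / K a b = f a * g b" using fg that by blast
    then have "K a b * (f a + 0) * (g b + 0) = x a b"
      using K_pos[of a b] by (simp add: field_simps)
    ultimately show ?thesis by simp
  qed
  moreover have "0 < Y n a b" if "a \<in> {1,2}" "b \<in> {1,2}" for n a b
    using that f g K_pos unfolding Y_def by (intro mult_pos_pos add_nonneg_pos) auto
  moreover have "diag_prod (Y n) = l * antidiag_prod (Y n)" for n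
    by (simp add: Y_def K_def diag_prod_def antidiag_prod_def)
  ultimately show ?thesis unfolding cross_ratio_limit_def by blast
qed

lemma cross_ratio_limit_corner_zero:
  fixes x :: "nat \<Rightarrow> nat \<Rightarrow> real" and \<epsilon> :: "nat \<Rightarrow> real"
  assumes nonneg: "\<forall>a\<in>{1,2}. \<forall>b\<in>{1,2}. 0 \<le> x a b" and "k > 0" and "x 1 1 = 0"
    and \<epsilon>: "\<And>n. \<epsilon> n > 0" "\<epsilon> \<longlonglongrightarrow> 0"
  shows "cross_ratio_limit (\<lambda>n. k * \<epsilon> n ^ 2) x"
proof -
  \<comment> \<open>Perturb the other three entries by \<epsilon> and solve for the (1,1) entry; it stays below
    k \<epsilon> (x 1 2 + \<epsilon>) (x 2 1 + \<epsilon>) even when x 2 2 = 0.\<close>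
  define Y where "Y n a b = (if a = 1 \<and> b = 1
      then k * \<epsilon> n ^ 2 * (x 1 2 + \<epsilon> n) * (x 2 1 + \<epsilon> n) / (x 2 2 + \<epsilon> n)
      else x a b + \<epsilon> n)" for n a b
  have perturbed_pos: "x a b + \<epsilon> n > 0" if "a \<in> {1,2}" "b \<in> {1,2}" for a b n
    using nonneg that \<epsilon>(1)[of n] by (auto intro: add_nonneg_pos)
  have Y_pos: "0 < Y n a b" if "a \<in> {1,2}" "b \<in> {1,2}" for n a b
    using that perturbed_pos[of 1 2 n] perturbed_pos[of 2 1 n] perturbed_pos[of 2 2 n]
      perturbed_pos[of a b n] \<epsilon>(1)[of n] \<open>k > 0\<close>
    unfolding Y_def by auto
  have "diag_prod (Y n) = k * \<epsilon> n ^ 2 * antidiag_prod (Y n)" for n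
    using perturbed_pos[of 2 2 n] by (simp add: Y_def diag_prod_def antidiag_prod_def)
  moreover have "(\<lambda>n. Y n a b) \<longlonglongrightarrow> x a b" if "a \<in> {1,2}" "b \<in> {1,2}" for a b
  proof (cases "a = 1 \<and> b = 1")
    case False
    have "(\<lambda>n. x a b + \<epsilon> n) \<longlonglongrightarrow> x a b + 0" by (intro tendsto_intros \<epsilon>(2))
    moreover have "(\<lambda>n. Y n a b) = (\<lambda>n. x a b + \<epsilon> n)" by (rule ext) (simp only: Y_def if_not_P[OF False])
    ultimately show ?thesis by (simp only: add_0_right)
  next
    case True
    define h where "h n = k * \<epsilon> n * (x 1 2 + \<epsilon> n) * (x 2 1 + \<epsilon> n)" for n
    have "h \<longlonglongrightarrow> k * 0 * (x 1 2 + 0) * (x 2 1 + 0)"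
      unfolding h_def by (intro tendsto_intros \<epsilon>(2))
    then have h: "h \<longlonglongrightarrow> 0" by simp
    have bound: "Y n 1 1 \<le> h n" for n
    proof -
      have "\<epsilon> n ^ 2 / (x 2 2 + \<epsilon> n) \<le> \<epsilon> n"
        using perturbed_pos[of 2 2 n] \<epsilon>(1)[of n] nonneg
        by (simp add: field_simps power2_eq_square)
      then have "k * (x 1 2 + \<epsilon> n) * (x 2 1 + \<epsilon> n) * (\<epsilon> n ^ 2 / (x 2 2 + \<epsilon> n))
          \<le> k * (x 1 2 + \<epsilon> n) * (x 2 1 + \<epsilon> n) * \<epsilon> n"
        using \<open>k > 0\<close> perturbed_pos[of 1 2 n] perturbed_pos[of 2 1 n] by (intro mult_left_mono) auto
      then show ?thesis by (simp add: Y_def h_def mult_ac)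
    qed
    have "(\<lambda>n. Y n 1 1) \<longlonglongrightarrow> 0"
    proof (rule tendsto_sandwich[of "\<lambda>n. 0" _ _ h])
      show "\<forall>\<^sub>F n in sequentially. 0 \<le> Y n 1 1" using Y_pos by (simp add: less_imp_le)
      show "\<forall>\<^sub>F n in sequentially. Y n 1 1 \<le> h n" using bound by simp
    qed (use h in simp_all)
    then show ?thesis using True \<open>x 1 1 = 0\<close> by simp
  qed
  ultimately show ?thesis unfolding cross_ratio_limit_def using Y_pos by blast
qed

lemma cross_ratio_limit_swap_rows:
  assumes "cross_ratio_limit \<kappa> x" and "\<And>a b. a \<in> {1,2} \<Longrightarrow> b \<in> {1,2} \<Longrightarrow> x' a b = x (3 - a) b"
  shows "cross_ratio_limit (\<lambda>n. inverse (\<kappa> n)) x'"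
proof -
  obtain Y where Y_pos: "\<forall>n. \<forall>a\<in>{1,2}. \<forall>b\<in>{1,2}. 0 < Y n a b"
    and Y_cr: "\<forall>n. diag_prod (Y n) = \<kappa> n * antidiag_prod (Y n)"
    and Y_lim: "\<forall>a\<in>{1,2}. \<forall>b\<in>{1,2}. (\<lambda>n. Y n a b) \<longlonglongrightarrow> x a b"
    using assms(1) unfolding cross_ratio_limit_def by blast
  have swap: "3 - a \<in> {1,2}" if "a \<in> {1,2::nat}" for a using that by auto
  have "diag_prod (\<lambda>a b. Y n (3 - a) b) = inverse (\<kappa> n) * antidiag_prod (\<lambda>a b. Y n (3 - a) b)" for n
  proof -
    have "antidiag_prod (Y n) > 0" "diag_prod (Y n) > 0"
      using Y_pos by (simp_all add: antidiag_prod_def diag_prod_def)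
    then have "\<kappa> n \<noteq> 0" using Y_cr by auto
    then show ?thesis using Y_cr[rule_format, of n]
      by (simp add: diag_prod_def antidiag_prod_def field_simps)
  qed
  then show ?thesis
    unfolding cross_ratio_limit_def using Y_pos Y_lim swap assms(2)
    by (intro exI[of _ "\<lambda>n a b. Y n (3 - a) b"]) simp
qed

lemma cross_ratio_limit_rotate:
  assumes "cross_ratio_limit \<kappa> x"
    and "\<And>a b. a \<in> {1,2} \<Longrightarrow> b \<in> {1,2} \<Longrightarrow> x' a b = x (3 - a) (3 - b)"
  shows "cross_ratio_limit \<kappa> x'"
proof -
  obtain Y where Y_pos: "\<forall>n. \<forall>a\<in>{1,2}. \<forall>b\<in>{1,2}. 0 < Y n a b"
    and Y_cr: "\<forall>n. diag_prod (Y n) = \<kappa> n * antidiag_prod (Y n)"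
    and Y_lim: "\<forall>a\<in>{1,2}. \<forall>b\<in>{1,2}. (\<lambda>n. Y n a b) \<longlonglongrightarrow> x a b"
    using assms(1) unfolding cross_ratio_limit_def by blast
  have swap: "3 - a \<in> {1,2}" if "a \<in> {1,2::nat}" for a using that by auto
  have "diag_prod (\<lambda>a b. Y n (3 - a) (3 - b)) = \<kappa> n * antidiag_prod (\<lambda>a b. Y n (3 - a) (3 - b))" for n
    using Y_cr[rule_format, of n] by (simp add: diag_prod_def antidiag_prod_def mult.commute)
  then show ?thesis
    unfolding cross_ratio_limit_def using Y_pos Y_lim swap assms(2)
    by (intro exI[of _ "\<lambda>n a b. Y n (3 - a) (3 - b)"]) simp
qed

lemma cross_ratio_limit_diag_zero:
  fixes x :: "nat \<Rightarrow> nat \<Rightarrow> real" and \<epsilon> :: "nat \<Rightarrow> real"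
  assumes nonneg: "\<forall>a\<in>{1,2}. \<forall>b\<in>{1,2}. 0 \<le> x a b" and "k > 0" and "diag_prod x = 0"
    and \<epsilon>: "\<And>n. \<epsilon> n > 0" "\<epsilon> \<longlonglongrightarrow> 0"
  shows "cross_ratio_limit (\<lambda>n. k * \<epsilon> n ^ 2) x"
proof (cases "x 1 1 = 0")
  case True
  then show ?thesis using cross_ratio_limit_corner_zero assms by blast
next
  case False
  then have "x 2 2 = 0" using \<open>diag_prod x = 0\<close> by (simp add: diag_prod_def)
  then have "cross_ratio_limit (\<lambda>n. k * \<epsilon> n ^ 2) (\<lambda>a b. x (3 - a) (3 - b))"
    using nonneg \<open>k > 0\<close> \<epsilon> by (intro cross_ratio_limit_corner_zero) auto
  then show ?thesis by (rule cross_ratio_limit_rotate) auto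
qed

lemma cross_ratio_limit_antidiag_zero:
  fixes x :: "nat \<Rightarrow> nat \<Rightarrow> real" and \<epsilon> :: "nat \<Rightarrow> real"
  assumes nonneg: "\<forall>a\<in>{1,2}. \<forall>b\<in>{1,2}. 0 \<le> x a b" and "k > 0" and "antidiag_prod x = 0"
    and \<epsilon>: "\<And>n. \<epsilon> n > 0" "\<epsilon> \<longlonglongrightarrow> 0"
  shows "cross_ratio_limit (\<lambda>n. k / \<epsilon> n ^ 2) x"
proof -
  have "cross_ratio_limit (\<lambda>n. inverse k * \<epsilon> n ^ 2) (\<lambda>a b. x (3 - a) b)"
    using assms by (intro cross_ratio_limit_diag_zero) (auto simp: diag_prod_def antidiag_prod_def mult.commute)
  then have "cross_ratio_limit (\<lambda>n. inverse (inverse k * \<epsilon> n ^ 2)) x"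
    by (rule cross_ratio_limit_swap_rows) auto
  then show ?thesis by (simp add: field_simps)
qed

lemma common_cross_ratios:
  fixes x :: "'c \<Rightarrow> nat \<Rightarrow> nat \<Rightarrow> real" and y :: "'d \<Rightarrow> nat \<Rightarrow> nat \<Rightarrow> real"
  assumes x_nonneg: "\<forall>c\<in>C. \<forall>a\<in>{1,2}. \<forall>b\<in>{1,2}. 0 \<le> x c a b"
    and y_nonneg: "\<forall>d\<in>D. \<forall>a\<in>{1,2}. \<forall>b\<in>{1,2}. 0 \<le> y d a b"
    and rel: "\<forall>c\<in>C. \<forall>d\<in>D.
      diag_prod (x c) * diag_prod (y d) = \<rho> * (antidiag_prod (x c) * antidiag_prod (y d))"
    and "c0 \<in> C" "d0 \<in> D" "diag_prod (x c0) \<noteq> 0" "diag_prod (y d0) \<noteq> 0"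
  obtains \<kappa> \<mu> where "\<kappa> > 0" "\<mu> > 0" "\<kappa> * \<mu> = \<rho>"
    "\<forall>c\<in>C. diag_prod (x c) = \<kappa> * antidiag_prod (x c)"
    "\<forall>d\<in>D. diag_prod (y d) = \<mu> * antidiag_prod (y d)"
proof -
  note rel0 = rel[rule_format, OF \<open>c0 \<in> C\<close> \<open>d0 \<in> D\<close>]
  have "antidiag_prod (x c0) \<ge> 0" "antidiag_prod (y d0) \<ge> 0"
    using x_nonneg y_nonneg \<open>c0 \<in> C\<close> \<open>d0 \<in> D\<close> by (simp_all add: antidiag_prod_def)
  moreover have "antidiag_prod (x c0) \<noteq> 0" "antidiag_prod (y d0) \<noteq> 0"
    using rel0 assms(6,7) by auto
  ultimately have x_anti: "antidiag_prod (x c0) > 0" and y_anti: "antidiag_prod (y d0) > 0"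
    by simp_all
  have "diag_prod (x c0) \<ge> 0" "diag_prod (y d0) \<ge> 0"
    using x_nonneg y_nonneg \<open>c0 \<in> C\<close> \<open>d0 \<in> D\<close> by (simp_all add: diag_prod_def)
  with assms(6,7) have x_diag: "diag_prod (x c0) > 0" and y_diag: "diag_prod (y d0) > 0"
    by simp_all
  define \<kappa> where "\<kappa> = diag_prod (x c0) / antidiag_prod (x c0)"
  define \<mu> where "\<mu> = diag_prod (y d0) / antidiag_prod (y d0)"
  have "\<kappa> * \<mu> = \<rho>"
    using rel0 x_anti y_anti by (simp add: \<kappa>_def \<mu>_def field_simps)
  have x_c0: "diag_prod (x c0) = \<kappa> * antidiag_prod (x c0)" using x_anti by (simp add: \<kappa>_def)
  have y_d0: "diag_prod (y d0) = \<mu> * antidiag_prod (y d0)" using y_anti by (simp add: \<mu>_def)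
  have "diag_prod (x c) = \<kappa> * antidiag_prod (x c)" if "c \<in> C" for c
  proof -
    have "diag_prod (x c) * diag_prod (y d0) = (\<kappa> * antidiag_prod (x c)) * diag_prod (y d0)"
      using rel[rule_format, OF that \<open>d0 \<in> D\<close>] unfolding y_d0 \<open>\<kappa> * \<mu> = \<rho>\<close>[symmetric]
      by (simp add: mult_ac)
    then show ?thesis using y_diag by simp
  qed
  moreover have "diag_prod (y d) = \<mu> * antidiag_prod (y d)" if "d \<in> D" for d
  proof -
    have "diag_prod (x c0) * diag_prod (y d) = diag_prod (x c0) * (\<mu> * antidiag_prod (y d))"
      using rel[rule_format, OF \<open>c0 \<in> C\<close> that] unfolding x_c0 \<open>\<kappa> * \<mu> = \<rho>\<close>[symmetric]
      by (simp add: mult_ac)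
    then show ?thesis using x_diag by simp
  qed
  moreover have "\<kappa> > 0" "\<mu> > 0" using x_anti y_anti x_diag y_diag by (simp_all add: \<kappa>_def \<mu>_def)
  ultimately show ?thesis using that \<open>\<kappa> * \<mu> = \<rho>\<close> by blast
qed

lemma common_cross_ratio_limits:
  fixes x :: "'c \<Rightarrow> nat \<Rightarrow> nat \<Rightarrow> real" and y :: "'d \<Rightarrow> nat \<Rightarrow> nat \<Rightarrow> real"
  assumes "\<rho> > 0"
    and x_nonneg: "\<forall>c\<in>C. \<forall>a\<in>{1,2}. \<forall>b\<in>{1,2}. 0 \<le> x c a b"
    and y_nonneg: "\<forall>d\<in>D. \<forall>a\<in>{1,2}. \<forall>b\<in>{1,2}. 0 \<le> y d a b"
    and rel: "\<forall>c\<in>C. \<forall>d\<in>D.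
      diag_prod (x c) * diag_prod (y d) = \<rho> * (antidiag_prod (x c) * antidiag_prod (y d))"
    and x_nondeg: "\<exists>c\<in>C. diag_prod (x c) \<noteq> 0 \<or> antidiag_prod (x c) \<noteq> 0"
    and y_nondeg: "\<exists>d\<in>D. diag_prod (y d) \<noteq> 0 \<or> antidiag_prod (y d) \<noteq> 0"
  obtains \<kappa> \<mu> where "\<forall>n. \<kappa> n * \<mu> n = \<rho>"
    "\<forall>c\<in>C. cross_ratio_limit \<kappa> (x c)" "\<forall>d\<in>D. cross_ratio_limit \<mu> (y d)"
proof -
  define \<epsilon> where "\<epsilon> n = inverse (real (Suc n))" for n
  have \<epsilon>: "\<And>n. \<epsilon> n > 0" "\<epsilon> \<longlonglongrightarrow> 0"
    unfolding \<epsilon>_def by (simp, rule LIMSEQ_inverse_real_of_nat)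
  have \<epsilon>_sq: "\<epsilon> n ^ 2 \<noteq> 0" for n using \<epsilon>(1)[of n] by simp
  consider (x_diag_zero) "\<forall>c\<in>C. diag_prod (x c) = 0" | (y_diag_zero) "\<forall>d\<in>D. diag_prod (y d) = 0"
    | (generic) c0 d0 where "c0 \<in> C" "d0 \<in> D" "diag_prod (x c0) \<noteq> 0" "diag_prod (y d0) \<noteq> 0"
    by blast
  then show ?thesis
  proof cases
    case x_diag_zero
    then obtain c1 where c1: "c1 \<in> C" "antidiag_prod (x c1) \<noteq> 0" using x_nondeg by blast
    have y_anti_zero: "antidiag_prod (y d) = 0" if "d \<in> D" for d
      using rel[rule_format, OF c1(1) that] x_diag_zero c1 \<open>\<rho> > 0\<close> by simp
    have "\<forall>n. 1 * \<epsilon> n ^ 2 * (\<rho> / \<epsilon> n ^ 2) = \<rho>" using \<epsilon>_sq by simp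
    moreover have "\<forall>c\<in>C. cross_ratio_limit (\<lambda>n. 1 * \<epsilon> n ^ 2) (x c)"
      using x_diag_zero x_nonneg \<epsilon> by (intro ballI cross_ratio_limit_diag_zero) auto
    moreover have "\<forall>d\<in>D. cross_ratio_limit (\<lambda>n. \<rho> / \<epsilon> n ^ 2) (y d)"
      using y_anti_zero y_nonneg \<epsilon> \<open>\<rho> > 0\<close> by (intro ballI cross_ratio_limit_antidiag_zero) auto
    ultimately show ?thesis by (rule that)
  next
    case y_diag_zero
    then obtain d1 where d1: "d1 \<in> D" "antidiag_prod (y d1) \<noteq> 0" using y_nondeg by blast
    have x_anti_zero: "antidiag_prod (x c) = 0" if "c \<in> C" for c
      using rel[rule_format, OF that d1(1)] y_diag_zero d1 \<open>\<rho> > 0\<close> by simp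
    have "\<forall>n. \<rho> / \<epsilon> n ^ 2 * (1 * \<epsilon> n ^ 2) = \<rho>" using \<epsilon>_sq by simp
    moreover have "\<forall>c\<in>C. cross_ratio_limit (\<lambda>n. \<rho> / \<epsilon> n ^ 2) (x c)"
      using x_anti_zero x_nonneg \<epsilon> \<open>\<rho> > 0\<close> by (intro ballI cross_ratio_limit_antidiag_zero) auto
    moreover have "\<forall>d\<in>D. cross_ratio_limit (\<lambda>n. 1 * \<epsilon> n ^ 2) (y d)"
      using y_diag_zero y_nonneg \<epsilon> by (intro ballI cross_ratio_limit_diag_zero) auto
    ultimately show ?thesis by (rule that)
  next
    case generic
    then obtain \<kappa> \<mu> where "\<kappa> > 0" "\<mu> > 0" "\<kappa> * \<mu> = \<rho>"
      "\<forall>c\<in>C. diag_prod (x c) = \<kappa> * antidiag_prod (x c)"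
      "\<forall>d\<in>D. diag_prod (y d) = \<mu> * antidiag_prod (y d)"
      using common_cross_ratios[OF x_nonneg y_nonneg rel] by blast
    then show ?thesis
      using x_nonneg y_nonneg
      by (intro that[of "\<lambda>n. \<kappa>" "\<lambda>n. \<mu>"] ballI cross_ratio_limit_const) auto
  qed
qed

lemma diag_antidiag_prod_mult:
  fixes P U V W :: "nat \<Rightarrow> nat \<Rightarrow> real"
  assumes "\<forall>a\<in>{1,2}. \<forall>b\<in>{1,2}. P a b * W a b = U a b * V a b"
  shows "diag_prod U * diag_prod V = diag_prod W * diag_prod P"
    and "antidiag_prod U * antidiag_prod V = antidiag_prod W * antidiag_prod P"
  using assms
  by (simp_all add: diag_prod_def antidiag_prod_def) (metis mult.commute mult.left_commute)+

lemma cross_ratio_relation_of_product: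
  fixes P U V W :: "nat \<Rightarrow> nat \<Rightarrow> real"
  assumes "\<forall>a\<in>{1,2}. \<forall>b\<in>{1,2}. P a b * W a b = U a b * V a b"
    and "diag_prod P = antidiag_prod P" and "antidiag_prod W \<noteq> 0"
  shows "diag_prod U * diag_prod V = diag_prod W / antidiag_prod W * (antidiag_prod U * antidiag_prod V)"
  using assms(2,3) unfolding diag_antidiag_prod_mult[OF assms(1)] by simp

section \<open>Conditional independence in contingency tables\<close>

lemma in_space_iff:
  "in_space r2 r4 a c b d \<longleftrightarrow> a \<in> {1,2} \<and> c \<in> {1..r2} \<and> b \<in> {1,2} \<and> d \<in> {1..r4}"
  by (auto simp: in_space_def)

lemma atLeastAtMost_1_2: "{1..2::nat} = {1,2}"
  by auto

definition indep_table :: "'a set \<Rightarrow> 'b set \<Rightarrow> ('a \<Rightarrow> 'b \<Rightarrow> real) \<Rightarrow> bool" where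
  "indep_table A B x \<longleftrightarrow> (\<forall>a\<in>A. \<forall>b\<in>B.
     x a b * (\<Sum>a'\<in>A. \<Sum>b'\<in>B. x a' b') = (\<Sum>b'\<in>B. x a b') * (\<Sum>a'\<in>A. x a' b))"

lemma cond_indep_iff_indep_table:
  fixes x :: "'a \<Rightarrow> 'b \<Rightarrow> real"
  assumes "finite A" "finite B" and nonneg: "\<forall>a\<in>A. \<forall>b\<in>B. 0 \<le> x a b"
  shows "(let m = (\<Sum>a\<in>A. \<Sum>b\<in>B. x a b) in m > 0 \<longrightarrow>
            (\<forall>a\<in>A. \<forall>b\<in>B. x a b / m = ((\<Sum>b'\<in>B. x a b') / m) * ((\<Sum>a'\<in>A. x a' b) / m)))
         \<longleftrightarrow> indep_table A B x"
proof (cases "(\<Sum>a\<in>A. \<Sum>b\<in>B. x a b) > 0")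
  case True
  have "x / m = r / m * (s / m) \<longleftrightarrow> x * m = r * s" if "m > 0" for x m r s :: real
    using that by (auto simp: field_simps power2_eq_square)
  then show ?thesis using True by (simp add: indep_table_def Let_def)
next
  case False
  have "(\<Sum>a\<in>A. \<Sum>b\<in>B. x a b) \<ge> 0" using nonneg by (simp add: sum_nonneg)
  then have "(\<Sum>a\<in>A. \<Sum>b\<in>B. x a b) = 0" using False by linarith
  then have "x a b = 0" if "a \<in> A" "b \<in> B" for a b
    using assms that by (simp add: sum_nonneg sum_nonneg_eq_0_iff)
  then show ?thesis using False by (simp add: indep_table_def Let_def)
qed

lemma indep_table_2x2_iff:
  fixes x :: "nat \<Rightarrow> nat \<Rightarrow> real"
  assumes nonneg: "\<forall>a\<in>{1,2}. \<forall>b\<in>{1,2}. 0 \<le> x a b"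
  shows "indep_table {1..2} {1..2} x \<longleftrightarrow> diag_prod x = antidiag_prod x"
proof -
  define m where "m = x 1 1 + x 1 2 + (x 2 1 + x 2 2)"
  have table: "indep_table {1..2} {1..2} x \<longleftrightarrow>
      x 1 1 * m = (x 1 1 + x 1 2) * (x 1 1 + x 2 1) \<and> x 1 2 * m = (x 1 1 + x 1 2) * (x 1 2 + x 2 2) \<and>
      x 2 1 * m = (x 2 1 + x 2 2) * (x 1 1 + x 2 1) \<and> x 2 2 * m = (x 2 1 + x 2 2) * (x 1 2 + x 2 2)"
    unfolding indep_table_def atLeastAtMost_1_2 by (simp add: m_def)
  show ?thesis
  proof
    assume "indep_table {1..2} {1..2} x"
    then have eqs: "x 1 1 * m = (x 1 1 + x 1 2) * (x 1 1 + x 2 1)" "x 2 2 * m = (x 2 1 + x 2 2) * (x 1 2 + x 2 2)"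
      "x 1 2 * m = (x 1 1 + x 1 2) * (x 1 2 + x 2 2)" "x 2 1 * m = (x 2 1 + x 2 2) * (x 1 1 + x 2 1)"
      unfolding table by blast+
    have "diag_prod x * m ^ 2 = (x 1 1 * m) * (x 2 2 * m)"
      by (simp add: diag_prod_def power2_eq_square mult_ac)
    also have "\<dots> = ((x 1 1 + x 1 2) * (x 1 2 + x 2 2)) * ((x 2 1 + x 2 2) * (x 1 1 + x 2 1))"
      unfolding eqs(1,2) by (simp add: mult_ac)
    also have "\<dots> = antidiag_prod x * m ^ 2"
      unfolding eqs(3,4)[symmetric] by (simp add: antidiag_prod_def power2_eq_square mult_ac)
    finally have "diag_prod x * m ^ 2 = antidiag_prod x * m ^ 2" .
    moreover have "m = 0 \<Longrightarrow> diag_prod x = antidiag_prod x"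
      using nonneg by (simp add: m_def diag_prod_def antidiag_prod_def add_nonneg_eq_0_iff)
    ultimately show "diag_prod x = antidiag_prod x" by auto
  next
    assume "diag_prod x = antidiag_prod x"
    then show "indep_table {1..2} {1..2} x"
      unfolding table m_def diag_prod_def antidiag_prod_def by algebra
  qed
qed

definition slice_dets_vanish :: "nat \<Rightarrow> nat \<Rightarrow> pmf4 \<Rightarrow> bool" where
  "slice_dets_vanish r2 r4 p \<longleftrightarrow>
     (\<forall>c\<in>{1..r2}. \<forall>d\<in>{1..r4}. diag_prod (\<lambda>a b. p a c b d) = antidiag_prod (\<lambda>a b. p a c b d))"

lemma CI_13_24_iff_slice_dets_vanish:
  assumes nonneg: "\<forall>a c b d. in_space r2 r4 a c b d \<longrightarrow> 0 \<le> p a c b d"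
  shows "CI_13_24 r2 r4 p \<longleftrightarrow> slice_dets_vanish r2 r4 p"
proof -
  have "CI_13_24 r2 r4 p \<longleftrightarrow>
      (\<forall>c\<in>{1..r2}. \<forall>d\<in>{1..r4}. indep_table {1..2} {1..2} (\<lambda>a b. p a c b d))"
    unfolding CI_13_24_def using nonneg
    by (intro ball_cong refl cond_indep_iff_indep_table) (auto intro!: nonneg[rule_format] simp: in_space_def)
  also have "\<dots> \<longleftrightarrow> slice_dets_vanish r2 r4 p"
    unfolding slice_dets_vanish_def using nonneg
    by (intro ball_cong refl indep_table_2x2_iff) (auto intro!: nonneg[rule_format] simp: in_space_def)
  finally show ?thesis .
qed

text \<open>The value of X2 resp. X4 comes first, so that marg123 r4 p c and marg134 r2 p d are
  2x2 tables in (X1,X3).\<close>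

definition marg123 :: "nat \<Rightarrow> pmf4 \<Rightarrow> nat \<Rightarrow> nat \<Rightarrow> nat \<Rightarrow> real" where
  "marg123 r4 p c a b = (\<Sum>d\<in>{1..r4}. p a c b d)"

definition marg134 :: "nat \<Rightarrow> pmf4 \<Rightarrow> nat \<Rightarrow> nat \<Rightarrow> nat \<Rightarrow> real" where
  "marg134 r2 p d a b = (\<Sum>c\<in>{1..r2}. p a c b d)"

definition marg13 :: "nat \<Rightarrow> nat \<Rightarrow> pmf4 \<Rightarrow> nat \<Rightarrow> nat \<Rightarrow> real" where
  "marg13 r2 r4 p a b = (\<Sum>c\<in>{1..r2}. \<Sum>d\<in>{1..r4}. p a c b d)"

lemma CI_24_13_iff_marginal_factorization:
  assumes nonneg: "\<forall>a c b d. in_space r2 r4 a c b d \<longrightarrow> 0 \<le> p a c b d"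
  shows "CI_24_13 r2 r4 p \<longleftrightarrow> (\<forall>a\<in>{1..2}. \<forall>b\<in>{1..2}. \<forall>c\<in>{1..r2}. \<forall>d\<in>{1..r4}.
           p a c b d * marg13 r2 r4 p a b = marg123 r4 p c a b * marg134 r2 p d a b)"
proof -
  have "CI_24_13 r2 r4 p \<longleftrightarrow>
      (\<forall>a\<in>{1..2}. \<forall>b\<in>{1..2}. indep_table {1..r2} {1..r4} (\<lambda>c d. p a c b d))"
    unfolding CI_24_13_def using nonneg
    by (intro ball_cong refl cond_indep_iff_indep_table) (auto intro!: nonneg[rule_format] simp: in_space_def)
  then show ?thesis by (simp add: indep_table_def marg13_def marg123_def marg134_def)
qed

section \<open>The four-cycle model and its closure\<close>

definition factors_C4 :: "nat \<Rightarrow> nat \<Rightarrow> pmf4 \<Rightarrow> bool" where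
  "factors_C4 r2 r4 q \<longleftrightarrow> (\<exists>\<psi>12 \<psi>23 \<psi>34 \<psi>14 :: nat \<Rightarrow> nat \<Rightarrow> real.
     \<forall>x1 x2 x3 x4. in_space r2 r4 x1 x2 x3 x4 \<longrightarrow>
       q x1 x2 x3 x4 = \<psi>12 x1 x2 * \<psi>23 x2 x3 * \<psi>34 x3 x4 * \<psi>14 x1 x4)"

lemma model_C4_iff:
  "model_C4 r2 r4 q \<longleftrightarrow> is_dist r2 r4 q \<and>
     (\<forall>x1 x2 x3 x4. in_space r2 r4 x1 x2 x3 x4 \<longrightarrow> q x1 x2 x3 x4 > 0) \<and> factors_C4 r2 r4 q"
  by (simp add: model_C4_def factors_C4_def)

lemma slice_dets_vanish_if_factors_C4:
  assumes "factors_C4 r2 r4 q"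
  shows "slice_dets_vanish r2 r4 q"
proof -
  obtain \<psi>12 \<psi>23 \<psi>34 \<psi>14 :: "nat \<Rightarrow> nat \<Rightarrow> real" where
    q: "\<And>x1 x2 x3 x4. in_space r2 r4 x1 x2 x3 x4 \<Longrightarrow>
          q x1 x2 x3 x4 = \<psi>12 x1 x2 * \<psi>23 x2 x3 * \<psi>34 x3 x4 * \<psi>14 x1 x4"
    using assms unfolding factors_C4_def by blast
  show ?thesis
    unfolding slice_dets_vanish_def diag_prod_def antidiag_prod_def
    by (auto simp: q in_space_def mult_ac)
qed

lemma slice_dets_vanish_if_closure:
  assumes "closure_model_C4 r2 r4 p"
  shows "slice_dets_vanish r2 r4 p"
  unfolding slice_dets_vanish_def
proof (intro ballI)
  fix c d assume "c \<in> {1..r2}" "d \<in> {1..r4}"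
  then have space: "in_space r2 r4 a c b d" if "a \<in> {1,2}" "b \<in> {1,2}" for a b
    using that by (auto simp: in_space_def)
  obtain q where "\<And>n. model_C4 r2 r4 (q n)"
    and q_lim: "\<And>a c b d. in_space r2 r4 a c b d \<Longrightarrow> (\<lambda>n. q n a c b d) \<longlonglongrightarrow> p a c b d"
    using assms unfolding closure_model_C4_def by blast
  then have "slice_dets_vanish r2 r4 (q n)" for n
    by (simp add: model_C4_iff slice_dets_vanish_if_factors_C4)
  then have "diag_prod (\<lambda>a b. q n a c b d) = antidiag_prod (\<lambda>a b. q n a c b d)" for n
    using \<open>c \<in> {1..r2}\<close> \<open>d \<in> {1..r4}\<close> unfolding slice_dets_vanish_def by blast
  moreover have "(\<lambda>n. diag_prod (\<lambda>a b. q n a c b d)) \<longlonglongrightarrow> diag_prod (\<lambda>a b. p a c b d)"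
    "(\<lambda>n. antidiag_prod (\<lambda>a b. q n a c b d)) \<longlonglongrightarrow> antidiag_prod (\<lambda>a b. p a c b d)"
    unfolding diag_prod_def antidiag_prod_def by (auto intro!: tendsto_mult q_lim space)
  ultimately show "diag_prod (\<lambda>a b. p a c b d) = antidiag_prod (\<lambda>a b. p a c b d)"
    using LIMSEQ_unique by auto
qed

lemma slice_dets_vanish_if_cond2:
  assumes nonneg: "\<forall>a c b d. in_space r2 r4 a c b d \<longrightarrow> 0 \<le> p a c b d"
    and "cond2 r2 r4 p"
  shows "slice_dets_vanish r2 r4 p"
  unfolding slice_dets_vanish_def
proof (intro ballI)
  fix c d assume "c \<in> {1..r2}" "d \<in> {1..r4}"
  then have space: "in_space r2 r4 a c b d" if "a \<in> {1,2}" "b \<in> {1,2}" for a b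
    using that by (auto simp: in_space_def)
  obtain i E F where cond: "\<forall>x1 x2 x3 x4. in_space r2 r4 x1 x2 x3 x4 \<and> p x1 x2 x3 x4 > 0 \<longrightarrow>
      ((x1, x3) = (1, 1) \<longrightarrow> coord i x2 x4 \<in> E) \<and> ((x1, x3) = (1, 2) \<longrightarrow> coord i x2 x4 \<in> F) \<and>
      ((x1, x3) = (2, 1) \<longrightarrow> coord i x2 x4 \<notin> F) \<and> ((x1, x3) = (2, 2) \<longrightarrow> coord i x2 x4 \<notin> E)"
    using \<open>cond2 r2 r4 p\<close> unfolding cond2_def by blast
  \<comment> \<open>The events (1,1) and (2,2), as well as (1,2) and (2,1), force X_i into complementary
    sets, so in each pair one cell of the slice has probability zero.\<close>
  have "\<not> (p 1 c 1 d > 0 \<and> p 2 c 2 d > 0)" "\<not> (p 1 c 2 d > 0 \<and> p 2 c 1 d > 0)"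
    using cond[rule_format, of 1 c 1 d] cond[rule_format, of 2 c 2 d]
      cond[rule_format, of 1 c 2 d] cond[rule_format, of 2 c 1 d] space by auto
  moreover have "p a c b d \<ge> 0" if "a \<in> {1,2}" "b \<in> {1,2}" for a b
    using nonneg space that by blast
  ultimately have "p 1 c 1 d * p 2 c 2 d = 0" "p 1 c 2 d * p 2 c 1 d = 0"
    by (auto simp: less_le)
  then show "diag_prod (\<lambda>a b. p a c b d) = antidiag_prod (\<lambda>a b. p a c b d)"
    unfolding diag_prod_def antidiag_prod_def by linarith
qed

lemma factors_C4_if_positive:
  fixes q :: pmf4
  assumes pos: "\<And>a c b d. in_space r2 r4 a c b d \<Longrightarrow> q a c b d > 0"
    and "r2 \<ge> 1" "r4 \<ge> 1"
    and indep24: "\<And>a c b d. in_space r2 r4 a c b d \<Longrightarrow> q a c b d * q a 1 b 1 = q a c b 1 * q a 1 b d"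
    and indep13: "\<And>a c b d. in_space r2 r4 a c b d \<Longrightarrow> q a c b d * q 1 c 1 d = q a c 1 d * q 1 c b d"
  shows "factors_C4 r2 r4 q"
  unfolding factors_C4_def
proof (intro exI allI impI)
  fix a c b d assume space: "in_space r2 r4 a c b d"
  then have space_ref: "in_space r2 r4 a' c' b' d'"
    if "a' \<in> {1, a}" "c' \<in> {1, c}" "b' \<in> {1, b}" "d' \<in> {1, d}" for a' c' b' d'
    using that \<open>r2 \<ge> 1\<close> \<open>r4 \<ge> 1\<close> by (auto simp: in_space_def)
  have P: "q a' c' b' d' > 0"
    if "a' \<in> {1, a}" "c' \<in> {1, c}" "b' \<in> {1, b}" "d' \<in> {1, d}" for a' c' b' d'
    using pos space_ref that by blast
  \<comment> \<open>Solve the identities for q a c b d, moving one coordinate at a time to the reference level 1.\<close>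
  have move3: "q a c b d = q a c 1 d * q 1 c b d / q 1 c 1 d"
    using indep13[OF space] P[of 1 c 1 d] by (simp add: field_simps)
  have move4: "q a' c b' d = q a' c b' 1 * q a' 1 b' d / q a' 1 b' 1" if "a' \<in> {1, a}" "b' \<in> {1, b}" for a' b'
    using indep24[of a' c b' d] space_ref[of a' c b' d] P[of a' 1 b' 1] that by (simp add: field_simps)
  have "q a c b d = q a c 1 1 * q a 1 1 d / q a 1 1 1 * (q 1 c b 1 * q 1 1 b d / q 1 1 b 1) /
      (q 1 c 1 1 * q 1 1 1 d / q 1 1 1 1)"
    using move3 move4[of a 1] move4[of 1 b] move4[of 1 1] by simp
  also have "q a c 1 1 * q a 1 1 d / q a 1 1 1 * (q 1 c b 1 * q 1 1 b d / q 1 1 b 1) /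
      (q 1 c 1 1 * q 1 1 1 d / q 1 1 1 1) =
      q a c 1 1 / q 1 c 1 1 * q 1 c b 1 * (q 1 1 b d / q 1 1 b 1) *
      (q a 1 1 d * q 1 1 1 1 / (q a 1 1 1 * q 1 1 1 d))"
    using P[of 1 c 1 1] P[of 1 1 1 d] P[of a 1 1 1] P[of 1 1 b 1] P[of 1 1 1 1]
    by (simp add: field_simps)
  finally show "q a c b d = (\<lambda>a c. q a c 1 1 / q 1 c 1 1) a c * (\<lambda>c b. q 1 c b 1) c b *
      (\<lambda>b d. q 1 1 b d / q 1 1 b 1) b d * (\<lambda>a d. q a 1 1 d * q 1 1 1 1 / (q a 1 1 1 * q 1 1 1 d)) a d"
    by simp
qed

lemma is_dist_dims_pos:
  assumes "is_dist r2 r4 p"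
  shows "r2 \<ge> 1" "r4 \<ge> 1"
proof -
  have "r2 \<noteq> 0"
  proof
    assume "r2 = 0"
    with assms show False by (simp add: is_dist_def)
  qed
  moreover have "r4 \<noteq> 0"
  proof
    assume "r4 = 0"
    with assms show False by (simp add: is_dist_def)
  qed
  ultimately show "r2 \<ge> 1" "r4 \<ge> 1" by simp_all
qed

lemma closure_model_C4_if_limit_of_factored:
  fixes R :: "nat \<Rightarrow> pmf4"
  assumes dist: "is_dist r2 r4 p"
    and R_pos: "\<And>n a c b d. in_space r2 r4 a c b d \<Longrightarrow> 0 < R n a c b d"
    and R_factors: "\<And>n. factors_C4 r2 r4 (R n)"
    and R_lim: "\<And>a c b d. in_space r2 r4 a c b d \<Longrightarrow> (\<lambda>n. R n a c b d) \<longlonglongrightarrow> p a c b d"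
  shows "closure_model_C4 r2 r4 p"
proof -
  define Z where "Z n = (\<Sum>x1\<in>{1..2}. \<Sum>x2\<in>{1..r2}. \<Sum>x3\<in>{1..2}. \<Sum>x4\<in>{1..r4}. R n x1 x2 x3 x4)" for n
  define q where "q n a c b d = R n a c b d / Z n" for n a c b d
  have "r2 \<ge> 1" "r4 \<ge> 1" using is_dist_dims_pos[OF dist] .
  then have Z_pos: "Z n > 0" for n
    unfolding Z_def by (intro sum_pos) (auto intro!: R_pos simp: in_space_def)
  have "Z \<longlonglongrightarrow> (\<Sum>x1\<in>{1..2}. \<Sum>x2\<in>{1..r2}. \<Sum>x3\<in>{1..2}. \<Sum>x4\<in>{1..r4}. p x1 x2 x3 x4)"
    unfolding Z_def by (intro tendsto_sum R_lim) (auto simp: in_space_def)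
  then have "Z \<longlonglongrightarrow> 1" using dist by (simp add: is_dist_def)
  then have "(\<lambda>n. q n a c b d) \<longlonglongrightarrow> p a c b d / 1" if "in_space r2 r4 a c b d" for a c b d
    unfolding q_def by (intro tendsto_divide R_lim that) auto
  moreover have "model_C4 r2 r4 (q n)" for n
    unfolding model_C4_iff
  proof (intro conjI allI impI)
    show q_pos: "q n a c b d > 0" if "in_space r2 r4 a c b d" for a c b d
      using R_pos[OF that] Z_pos[of n] by (simp add: q_def)
    have "(\<Sum>x1\<in>{1..2}. \<Sum>x2\<in>{1..r2}. \<Sum>x3\<in>{1..2}. \<Sum>x4\<in>{1..r4}. q n x1 x2 x3 x4) = Z n / Z n"
      unfolding q_def by (simp only: sum_divide_distrib[symmetric] Z_def)
    then show "is_dist r2 r4 (q n)"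
      using q_pos Z_pos[of n] by (auto simp: is_dist_def less_imp_le)
    obtain \<psi>12 \<psi>23 \<psi>34 \<psi>14 :: "nat \<Rightarrow> nat \<Rightarrow> real" where
      "\<forall>x1 x2 x3 x4. in_space r2 r4 x1 x2 x3 x4 \<longrightarrow>
         R n x1 x2 x3 x4 = \<psi>12 x1 x2 * \<psi>23 x2 x3 * \<psi>34 x3 x4 * \<psi>14 x1 x4"
      using R_factors unfolding factors_C4_def by blast
    then show "factors_C4 r2 r4 (q n)"
      unfolding factors_C4_def q_def
      by (intro exI[of _ "\<lambda>x1 x2. \<psi>12 x1 x2 / Z n"] exI[of _ \<psi>23] exI[of _ \<psi>34] exI[of _ \<psi>14]) auto
  qed
  ultimately show ?thesis unfolding closure_model_C4_def by auto
qed

lemma factors_C4_of_tables: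
  fixes U V :: "nat \<Rightarrow> nat \<Rightarrow> nat \<Rightarrow> real" and W :: "nat \<Rightarrow> nat \<Rightarrow> real"
  assumes "r2 \<ge> 1" "r4 \<ge> 1"
    and U_pos: "\<forall>c\<in>{1..r2}. \<forall>a\<in>{1,2}. \<forall>b\<in>{1,2}. 0 < U c a b"
    and V_pos: "\<forall>d\<in>{1..r4}. \<forall>a\<in>{1,2}. \<forall>b\<in>{1,2}. 0 < V d a b"
    and W_pos: "\<forall>a\<in>{1,2}. \<forall>b\<in>{1,2}. 0 < W a b"
    and U_cr: "\<forall>c\<in>{1..r2}. diag_prod (U c) = \<kappa> * antidiag_prod (U c)"
    and V_cr: "\<forall>d\<in>{1..r4}. diag_prod (V d) = \<mu> * antidiag_prod (V d)"
    and cross_ratios: "\<kappa> * \<mu> * antidiag_prod W = diag_prod W"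
  shows "factors_C4 r2 r4 (\<lambda>a c b d. U c a b * V d a b / W a b)"
proof -
  define R where "R = (\<lambda>a c b d. U c a b * V d a b / W a b)"
  have R_pos: "0 < R a c b d" if "in_space r2 r4 a c b d" for a c b d
  proof -
    have "a \<in> {1,2}" "c \<in> {1..r2}" "b \<in> {1,2}" "d \<in> {1..r4}" using that by (simp_all add: in_space_iff)
    then have "0 < U c a b" "0 < V d a b" "0 < W a b" using U_pos V_pos W_pos by blast+
    then show ?thesis by (simp add: R_def)
  qed
  \<comment> \<open>The cross ratios of U and V multiply to that of W, so R has cross ratio 1 in (X1,X3).\<close>
  have R_cross: "R 1 c 1 d * R 2 c 2 d = R 1 c 2 d * R 2 c 1 d"
    if "c \<in> {1..r2}" "d \<in> {1..r4}" for c d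
  proof -
    have "diag_prod W > 0" "antidiag_prod W > 0"
      using W_pos by (simp_all add: diag_prod_def antidiag_prod_def)
    have "R 1 c 1 d * R 2 c 2 d = diag_prod (U c) * diag_prod (V d) / diag_prod W"
      by (simp add: R_def diag_prod_def mult_ac)
    also have "\<dots> = \<kappa> * \<mu> * antidiag_prod (U c) * antidiag_prod (V d) / diag_prod W"
      using U_cr V_cr that by (simp add: mult_ac)
    also have "\<dots> = antidiag_prod (U c) * antidiag_prod (V d) / antidiag_prod W"
      using cross_ratios \<open>diag_prod W > 0\<close> \<open>antidiag_prod W > 0\<close> by (simp add: field_simps)
    also have "\<dots> = R 1 c 2 d * R 2 c 1 d"
      by (simp add: R_def antidiag_prod_def mult_ac)
    finally show ?thesis .
  qed
  have "factors_C4 r2 r4 R"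
  proof (rule factors_C4_if_positive[OF R_pos \<open>r2 \<ge> 1\<close> \<open>r4 \<ge> 1\<close>])
    show "R a c b d * R a 1 b 1 = R a c b 1 * R a 1 b d" for a c b d
      by (simp add: R_def mult_ac)
    show "R a c b d * R 1 c 1 d = R a c 1 d * R 1 c b d" if "in_space r2 r4 a c b d" for a c b d
      using that R_cross[of c d] by (auto simp: in_space_iff mult.commute)
  qed
  then show ?thesis unfolding R_def .
qed

lemma closure_model_C4_if_cross_ratio_limits:
  fixes u v :: "nat \<Rightarrow> nat \<Rightarrow> nat \<Rightarrow> real" and W :: "nat \<Rightarrow> nat \<Rightarrow> real"
  assumes dist: "is_dist r2 r4 p"
    and W_pos: "\<forall>a\<in>{1,2}. \<forall>b\<in>{1,2}. 0 < W a b"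
    and factorization: "\<And>a c b d. in_space r2 r4 a c b d \<Longrightarrow> p a c b d * W a b = u c a b * v d a b"
    and u_lim: "\<forall>c\<in>{1..r2}. cross_ratio_limit \<kappa> (u c)"
    and v_lim: "\<forall>d\<in>{1..r4}. cross_ratio_limit \<mu> (v d)"
    and cross_ratios: "\<forall>n. \<kappa> n * \<mu> n * antidiag_prod W = diag_prod W"
  shows "closure_model_C4 r2 r4 p"
proof -
  from bchoice[OF u_lim[unfolded cross_ratio_limit_def]] obtain U where
    U: "\<forall>c\<in>{1..r2}. (\<forall>n. \<forall>a\<in>{1,2}. \<forall>b\<in>{1,2}. 0 < U c n a b) \<and>
         (\<forall>n. diag_prod (U c n) = \<kappa> n * antidiag_prod (U c n)) \<and>
         (\<forall>a\<in>{1,2}. \<forall>b\<in>{1,2}. (\<lambda>n. U c n a b) \<longlonglongrightarrow> u c a b)" ..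
  from bchoice[OF v_lim[unfolded cross_ratio_limit_def]] obtain V where
    V: "\<forall>d\<in>{1..r4}. (\<forall>n. \<forall>a\<in>{1,2}. \<forall>b\<in>{1,2}. 0 < V d n a b) \<and>
         (\<forall>n. diag_prod (V d n) = \<mu> n * antidiag_prod (V d n)) \<and>
         (\<forall>a\<in>{1,2}. \<forall>b\<in>{1,2}. (\<lambda>n. V d n a b) \<longlonglongrightarrow> v d a b)" ..
  define R where "R n a c b d = U c n a b * V d n a b / W a b" for n a c b d
  have "r2 \<ge> 1" "r4 \<ge> 1" using is_dist_dims_pos[OF dist] .
  have R_factors: "factors_C4 r2 r4 (R n)" for n
    unfolding R_def using \<open>r2 \<ge> 1\<close> \<open>r4 \<ge> 1\<close> U V W_pos cross_ratios
    by (intro factors_C4_of_tables[where U="\<lambda>c. U c n" and V="\<lambda>d. V d n"]) auto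
  have R_pos: "0 < R n a c b d" if "in_space r2 r4 a c b d" for n a c b d
  proof -
    have "a \<in> {1,2}" "c \<in> {1..r2}" "b \<in> {1,2}" "d \<in> {1..r4}" using that by (simp_all add: in_space_iff)
    then have "0 < U c n a b" "0 < V d n a b" "0 < W a b" using U V W_pos by blast+
    then show ?thesis by (simp add: R_def)
  qed
  have R_lim: "(\<lambda>n. R n a c b d) \<longlonglongrightarrow> p a c b d" if "in_space r2 r4 a c b d" for a c b d
  proof -
    have "a \<in> {1,2}" "b \<in> {1,2}" using that by (simp_all add: in_space_iff)
    then have "W a b > 0" using W_pos by blast
    have "(\<lambda>n. R n a c b d) \<longlonglongrightarrow> u c a b * v d a b / W a b"
      unfolding R_def using that U V \<open>W a b > 0\<close>
      by (intro tendsto_intros) (auto simp: in_space_iff)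
    also have "u c a b * v d a b / W a b = p a c b d"
      using factorization[OF that] \<open>W a b > 0\<close> by (simp add: field_simps)
    finally show ?thesis .
  qed
  show ?thesis by (rule closure_model_C4_if_limit_of_factored[OF dist R_pos R_factors R_lim])
qed

section \<open>Marginal tables\<close>

lemma marginals_nonneg:
  assumes nonneg: "\<forall>a c b d. in_space r2 r4 a c b d \<longrightarrow> 0 \<le> p a c b d"
    and "a \<in> {1,2}" "b \<in> {1,2}"
  shows "c \<in> {1..r2} \<Longrightarrow> 0 \<le> marg123 r4 p c a b"
    and "d \<in> {1..r4} \<Longrightarrow> 0 \<le> marg134 r2 p d a b"
    and "0 \<le> marg13 r2 r4 p a b"
  using assms unfolding marg123_def marg134_def marg13_def
  by (auto intro!: sum_nonneg nonneg[rule_format] simp: in_space_iff)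

lemma le_marginals:
  assumes nonneg: "\<forall>a c b d. in_space r2 r4 a c b d \<longrightarrow> 0 \<le> p a c b d"
    and "in_space r2 r4 a c b d"
  shows "p a c b d \<le> marg123 r4 p c a b" and "p a c b d \<le> marg134 r2 p d a b"
  using assms unfolding marg123_def marg134_def
  by (auto intro!: member_le_sum nonneg[rule_format] simp: in_space_iff)

lemma marg13_eq_0_imp:
  assumes nonneg: "\<forall>a c b d. in_space r2 r4 a c b d \<longrightarrow> 0 \<le> p a c b d"
    and "a \<in> {1,2}" "b \<in> {1,2}" and "marg13 r2 r4 p a b = 0"
  shows "c \<in> {1..r2} \<Longrightarrow> d \<in> {1..r4} \<Longrightarrow> p a c b d = 0"
    and "c \<in> {1..r2} \<Longrightarrow> marg123 r4 p c a b = 0"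
    and "d \<in> {1..r4} \<Longrightarrow> marg134 r2 p d a b = 0"
proof -
  have "(\<Sum>c\<in>{1..r2}. marg123 r4 p c a b) = 0"
    using assms(4) by (simp add: marg13_def marg123_def)
  then have marg123_0: "marg123 r4 p c a b = 0" if "c \<in> {1..r2}" for c
    using sum_nonneg_eq_0_iff[of "{1..r2}" "\<lambda>c. marg123 r4 p c a b"]
      marginals_nonneg(1)[OF nonneg assms(2,3)] that by auto
  have block: "p a c b d = 0" if "c \<in> {1..r2}" "d \<in> {1..r4}" for c d
  proof -
    have "\<forall>d\<in>{1..r4}. 0 \<le> p a c b d" using nonneg assms(2,3) that(1) by (simp add: in_space_iff)
    then show ?thesis
      using marg123_0[OF that(1)] sum_nonneg_eq_0_iff[of "{1..r4}" "p a c b"] that(2)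
      by (auto simp: marg123_def)
  qed
  then show "c \<in> {1..r2} \<Longrightarrow> d \<in> {1..r4} \<Longrightarrow> p a c b d = 0"
    and "c \<in> {1..r2} \<Longrightarrow> marg123 r4 p c a b = 0"
    and "d \<in> {1..r4} \<Longrightarrow> marg134 r2 p d a b = 0"
    by (simp_all add: marg123_def marg134_def)
qed

lemma cond2_if_degenerate_marginal:
  fixes m :: "nat \<Rightarrow> nat \<Rightarrow> nat \<Rightarrow> real"
  assumes "i \<in> {2, 4}"
    and pos: "\<And>a c b d. in_space r2 r4 a c b d \<Longrightarrow> 0 < p a c b d \<Longrightarrow> 0 < m (coord i c d) a b"
    and degenerate: "\<forall>k\<in>{1..(if i = 2 then r2 else r4)}. diag_prod (m k) = 0 \<and> antidiag_prod (m k) = 0"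
  shows "cond2 r2 r4 p"
proof -
  define E where "E = {k\<in>{1..(if i = 2 then r2 else r4)}. 0 < m k 1 1}"
  define F where "F = {k\<in>{1..(if i = 2 then r2 else r4)}. 0 < m k 1 2}"
  have "((x1, x3) = (1, 1) \<longrightarrow> coord i x2 x4 \<in> E) \<and> ((x1, x3) = (1, 2) \<longrightarrow> coord i x2 x4 \<in> F) \<and>
        ((x1, x3) = (2, 1) \<longrightarrow> coord i x2 x4 \<notin> F) \<and> ((x1, x3) = (2, 2) \<longrightarrow> coord i x2 x4 \<notin> E)"
    if "in_space r2 r4 x1 x2 x3 x4" "0 < p x1 x2 x3 x4" for x1 x2 x3 x4
  proof -
    have k: "coord i x2 x4 \<in> {1..(if i = 2 then r2 else r4)}"
      using that(1) by (auto simp: coord_def in_space_def)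
    \<comment> \<open>A positive cell forces its entry of the marginal table to be positive, and then the
      vanishing products force the opposite corner to be zero.\<close>
    show ?thesis
      using pos[OF that] degenerate[rule_format, OF k] k
      by (auto simp: E_def F_def diag_prod_def antidiag_prod_def)
  qed
  moreover have "E \<subseteq> {1..(if i = 2 then r2 else r4)}" "F \<subseteq> {1..(if i = 2 then r2 else r4)}"
    by (auto simp: E_def F_def)
  ultimately show ?thesis
    unfolding cond2_def using \<open>i \<in> {2, 4}\<close> by blast
qed

lemma marginal_tables_nondegenerate:
  assumes nonneg: "\<forall>a c b d. in_space r2 r4 a c b d \<longrightarrow> 0 \<le> p a c b d"
    and "\<not> cond2 r2 r4 p"
  shows "\<exists>c\<in>{1..r2}. diag_prod (marg123 r4 p c) \<noteq> 0 \<or> antidiag_prod (marg123 r4 p c) \<noteq> 0"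
    and "\<exists>d\<in>{1..r4}. diag_prod (marg134 r2 p d) \<noteq> 0 \<or> antidiag_prod (marg134 r2 p d) \<noteq> 0"
proof -
  show "\<exists>c\<in>{1..r2}. diag_prod (marg123 r4 p c) \<noteq> 0 \<or> antidiag_prod (marg123 r4 p c) \<noteq> 0"
  proof (rule ccontr)
    assume "\<not> ?thesis"
    then have "cond2 r2 r4 p"
      using le_marginals(1)[OF nonneg]
      by (intro cond2_if_degenerate_marginal[of 2 _ _ p "marg123 r4 p"])
        (auto simp: coord_def intro: less_le_trans)
    with \<open>\<not> cond2 r2 r4 p\<close> show False ..
  qed
  show "\<exists>d\<in>{1..r4}. diag_prod (marg134 r2 p d) \<noteq> 0 \<or> antidiag_prod (marg134 r2 p d) \<noteq> 0"
  proof (rule ccontr)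
    assume "\<not> ?thesis"
    then have "cond2 r2 r4 p"
      using le_marginals(2)[OF nonneg]
      by (intro cond2_if_degenerate_marginal[of 4 _ _ p "marg134 r2 p"])
        (auto simp: coord_def intro: less_le_trans)
    with \<open>\<not> cond2 r2 r4 p\<close> show False ..
  qed
qed

lemma marg13_pos:
  assumes nonneg: "\<forall>a c b d. in_space r2 r4 a c b d \<longrightarrow> 0 \<le> p a c b d"
    and dets: "slice_dets_vanish r2 r4 p"
    and factorization: "\<And>a c b d. in_space r2 r4 a c b d \<Longrightarrow>
      p a c b d * marg13 r2 r4 p a b = marg123 r4 p c a b * marg134 r2 p d a b"
    and u_nondeg: "\<exists>c\<in>{1..r2}. diag_prod (marg123 r4 p c) \<noteq> 0 \<or> antidiag_prod (marg123 r4 p c) \<noteq> 0"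
    and v_nondeg: "\<exists>d\<in>{1..r4}. diag_prod (marg134 r2 p d) \<noteq> 0 \<or> antidiag_prod (marg134 r2 p d) \<noteq> 0"
    and ab: "a \<in> {1,2}" "b \<in> {1,2}"
  shows "0 < marg13 r2 r4 p a b"
proof (rule ccontr)
  assume "\<not> 0 < marg13 r2 r4 p a b"
  then have W0: "marg13 r2 r4 p a b = 0"
    using marginals_nonneg(3)[OF nonneg ab] by simp
  note block = marg13_eq_0_imp[OF nonneg ab W0]
  \<comment> \<open>The empty cell (a,b) kills one of the two products in every slice, hence both by the
    vanishing determinant, and with them the corresponding products of marginal tables.\<close>
  have products_0: "diag_prod (marg123 r4 p c) * diag_prod (marg134 r2 p d) = 0 \<and>
      antidiag_prod (marg123 r4 p c) * antidiag_prod (marg134 r2 p d) = 0"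
    if "c \<in> {1..r2}" "d \<in> {1..r4}" for c d
  proof -
    have "diag_prod (\<lambda>a b. p a c b d) = 0 \<or> antidiag_prod (\<lambda>a b. p a c b d) = 0"
      using block(1)[OF that] ab by (auto simp: diag_prod_def antidiag_prod_def)
    then have "diag_prod (\<lambda>a b. p a c b d) = 0" "antidiag_prod (\<lambda>a b. p a c b d) = 0"
      using dets that unfolding slice_dets_vanish_def by auto
    moreover have "\<forall>a\<in>{1,2}. \<forall>b\<in>{1,2}.
        p a c b d * marg13 r2 r4 p a b = marg123 r4 p c a b * marg134 r2 p d a b"
      using factorization that by (simp add: in_space_iff)
    note products = diag_antidiag_prod_mult[OF this]
    ultimately show ?thesis by (simp add: products)
  qed
  obtain c1 where c1: "c1 \<in> {1..r2}"
    "diag_prod (marg123 r4 p c1) \<noteq> 0 \<or> antidiag_prod (marg123 r4 p c1) \<noteq> 0"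
    using u_nondeg by blast
  obtain d1 where d1: "d1 \<in> {1..r4}"
    "diag_prod (marg134 r2 p d1) \<noteq> 0 \<or> antidiag_prod (marg134 r2 p d1) \<noteq> 0"
    using v_nondeg by blast
  have "(diag_prod (marg123 r4 p c1) = 0 \<and> diag_prod (marg134 r2 p d1) = 0) \<or>
      (antidiag_prod (marg123 r4 p c1) = 0 \<and> antidiag_prod (marg134 r2 p d1) = 0)"
    using ab block(2)[OF c1(1)] block(3)[OF d1(1)] by (auto simp: diag_prod_def antidiag_prod_def)
  then show False using products_0[OF c1(1) d1(1)] c1(2) d1(2) by auto
qed

lemma closure_model_C4_if_not_cond2:
  assumes dist: "is_dist r2 r4 p" and "CI_13_24 r2 r4 p" "CI_24_13 r2 r4 p" "\<not> cond2 r2 r4 p"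
  shows "closure_model_C4 r2 r4 p"
proof -
  have nonneg: "\<forall>a c b d. in_space r2 r4 a c b d \<longrightarrow> 0 \<le> p a c b d"
    using dist by (simp add: is_dist_def)
  define u where "u = marg123 r4 p"
  define v where "v = marg134 r2 p"
  define W where "W = marg13 r2 r4 p"
  have factorization: "p a c b d * W a b = u c a b * v d a b" if "in_space r2 r4 a c b d" for a c b d
    using \<open>CI_24_13 r2 r4 p\<close> that
    unfolding CI_24_13_iff_marginal_factorization[OF nonneg] u_def v_def W_def in_space_def by blast
  have dets: "slice_dets_vanish r2 r4 p"
    using \<open>CI_13_24 r2 r4 p\<close> CI_13_24_iff_slice_dets_vanish[OF nonneg] by blast
  note nondeg = marginal_tables_nondegenerate[OF nonneg \<open>\<not> cond2 r2 r4 p\<close>, folded u_def v_def]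
  have W_pos: "\<forall>a\<in>{1,2}. \<forall>b\<in>{1,2}. 0 < W a b"
    using marg13_pos[OF nonneg dets] factorization nondeg unfolding u_def v_def W_def by blast
  then have "diag_prod W > 0" "antidiag_prod W > 0"
    by (simp_all add: diag_prod_def antidiag_prod_def)
  define \<rho> where "\<rho> = diag_prod W / antidiag_prod W"
  have "\<rho> > 0" using \<open>diag_prod W > 0\<close> \<open>antidiag_prod W > 0\<close> by (simp add: \<rho>_def)
  have rel: "\<forall>c\<in>{1..r2}. \<forall>d\<in>{1..r4}.
      diag_prod (u c) * diag_prod (v d) = \<rho> * (antidiag_prod (u c) * antidiag_prod (v d))"
  proof (intro ballI)
    fix c d assume cd: "c \<in> {1..r2}" "d \<in> {1..r4}"
    show "diag_prod (u c) * diag_prod (v d) = \<rho> * (antidiag_prod (u c) * antidiag_prod (v d))"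
      unfolding \<rho>_def
    proof (rule cross_ratio_relation_of_product)
      show "\<forall>a\<in>{1,2}. \<forall>b\<in>{1,2}. p a c b d * W a b = u c a b * v d a b"
        using factorization cd by (simp add: in_space_iff)
      show "diag_prod (\<lambda>a b. p a c b d) = antidiag_prod (\<lambda>a b. p a c b d)"
        using dets cd unfolding slice_dets_vanish_def by blast
    qed (use \<open>antidiag_prod W > 0\<close> in simp)
  qed
  have u_nonneg: "\<forall>c\<in>{1..r2}. \<forall>a\<in>{1,2}. \<forall>b\<in>{1,2}. 0 \<le> u c a b"
    and v_nonneg: "\<forall>d\<in>{1..r4}. \<forall>a\<in>{1,2}. \<forall>b\<in>{1,2}. 0 \<le> v d a b"
    using marginals_nonneg(1,2)[OF nonneg] unfolding u_def v_def by blast+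
  obtain \<kappa> \<mu> where "\<forall>n. \<kappa> n * \<mu> n = \<rho>"
    "\<forall>c\<in>{1..r2}. cross_ratio_limit \<kappa> (u c)" "\<forall>d\<in>{1..r4}. cross_ratio_limit \<mu> (v d)"
    using common_cross_ratio_limits[OF \<open>\<rho> > 0\<close> u_nonneg v_nonneg rel nondeg] by blast
  moreover have "\<rho> * antidiag_prod W = diag_prod W"
    using \<open>antidiag_prod W > 0\<close> by (simp add: \<rho>_def)
  ultimately show ?thesis
    using closure_model_C4_if_cross_ratio_limits[OF dist W_pos factorization] by auto
qed

theorem corollary4p5:
  fixes r2 r4 :: nat
  shows "(\<forall>p. is_dist r2 r4 p \<and> CI_13_24 r2 r4 p \<and> CI_24_13 r2 r4 p \<longrightarrow>
              closure_model_C4 r2 r4 p \<or> cond2 r2 r4 p) \<and>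
         (\<forall>p. is_dist r2 r4 p \<and> (closure_model_C4 r2 r4 p \<or> cond2 r2 r4 p) \<and>
              CI_24_13 r2 r4 p \<longrightarrow> CI_13_24 r2 r4 p \<and> CI_24_13 r2 r4 p)"
proof (intro conjI allI impI)
  fix p assume "is_dist r2 r4 p \<and> CI_13_24 r2 r4 p \<and> CI_24_13 r2 r4 p"
  then show "closure_model_C4 r2 r4 p \<or> cond2 r2 r4 p"
    using closure_model_C4_if_not_cond2 by blast
next
  fix p assume p: "is_dist r2 r4 p \<and> (closure_model_C4 r2 r4 p \<or> cond2 r2 r4 p) \<and> CI_24_13 r2 r4 p"
  then have nonneg: "\<forall>a c b d. in_space r2 r4 a c b d \<longrightarrow> 0 \<le> p a c b d"
    by (simp add: is_dist_def)
  have "slice_dets_vanish r2 r4 p"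
    using p slice_dets_vanish_if_closure slice_dets_vanish_if_cond2[OF nonneg] by blast
  then show "CI_13_24 r2 r4 p" using CI_13_24_iff_slice_dets_vanish[OF nonneg] by blast
  show "CI_24_13 r2 r4 p" using p by blast
qed

end
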